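(* Let $n$ be a number and $p\ge 0$ an integer such that the ball $\langle n;-\frac{1}{2^p}\rangle$ is balanced. Then for every integer $m\ge 0$, every integer $q\ge 0$, and every $a$ that is either an odd integer with $0<a<2^q$ or $a=0$, such that $m+a2^{-q}>0$, and for any game $H$ whose value is $m+\frac{a}{2^q}$, \[\Big\langle n;-\frac{1}{2^p}\Big\rangle\mathbin{:}H=n+\frac{1}{2^p}-\frac{1}{2^{p+m}}+\frac{a}{2^{p+m+q+1}}.\]
   Context: Games are short normal-play combinatorial games, written $\{L\mid R\}$, with the usual disjunctive sum and equality of values. A number is a game with $G^L<G<G^R$ for all options, with values identified with dyadic rationals. The ordinal sum is $G\mathbin{:}H\cong\{L(G),\,G\mathbin{:}L(H)\mid R(G),\,G\mathbin{:}R(H)\}$. For numbers $m,\Delta$, the ball $\langle m;\Delta\rangle$ is the game $\{x\mid y\}$ where $x,y$ are the canonical forms of $m+\Delta$ and $m-\Delta$; it is balanced if $\langle m;\Delta\rangle+\langle m;\Delta\rangle=m+m$. *)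

theory Defs
  imports Complex_Main
begin

datatype game = Game "game list" "game list"

primrec left :: "game \<Rightarrow> game list" where "left (Game L R) = L"
primrec right :: "game \<Rightarrow> game list" where "right (Game L R) = R"

lemma size_opt_lt:
  "x \<in> set xs \<Longrightarrow> size x < size (Game xs ys)"
  "y \<in> set ys \<Longrightarrow> size y < size (Game xs ys)"
  by (simp_all add: less_Suc_eq_le trans_le_add1 trans_le_add2 size_list_estimation')

lemma size_left_lt: "x \<in> set (left g) \<Longrightarrow> size x < size g"
  by (cases g) (auto dest: size_opt_lt)
lemma size_right_lt: "x \<in> set (right g) \<Longrightarrow> size x < size g"
  by (cases g) (auto dest: size_opt_lt)

function game_le :: "game \<Rightarrow> game \<Rightarrow> bool" where
  "game_le G H =
     ((\<forall>gl \<in> set (left G). \<not> game_le H gl) \<and> (\<forall>hr \<in> set (right H). \<not> game_le hr G))"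
  by auto
termination
  by (relation "measure (\<lambda>(g, h). size g + size h)")
     (auto dest: size_left_lt size_right_lt)

definition game_eq :: "game \<Rightarrow> game \<Rightarrow> bool" where
  "game_eq G H \<longleftrightarrow> game_le G H \<and> game_le H G"

primrec game_neg :: "game \<Rightarrow> game" where
  "game_neg (Game L R) = Game (map game_neg R) (map game_neg L)"

function game_plus :: "game \<Rightarrow> game \<Rightarrow> game" where
  "game_plus G H =
     Game (map (\<lambda>gl. game_plus gl H) (left G) @ map (\<lambda>hl. game_plus G hl) (left H))
          (map (\<lambda>gr. game_plus gr H) (right G) @ map (\<lambda>hr. game_plus G hr) (right H))"
  by auto
termination
  by (relation "measure (\<lambda>(g, h). size g + size h)")
     (auto dest: size_left_lt size_right_lt)

primrec ordsum :: "game \<Rightarrow> game \<Rightarrow> game" where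
  "ordsum G (Game L R) = Game (left G @ map (ordsum G) L) (right G @ map (ordsum G) R)"

primrec nat_game :: "nat \<Rightarrow> game" where
  "nat_game 0 = Game [] []"
| "nat_game (Suc k) = Game [nat_game k] []"

definition int_game :: "int \<Rightarrow> game" where
  "int_game z = (if 0 \<le> z then nat_game (nat z) else game_neg (nat_game (nat (- z))))"

text \<open>Canonical form of the dyadic rational j / 2^k.\<close>
function dy_game :: "int \<Rightarrow> nat \<Rightarrow> game" where
  "dy_game j k =
     (if k = 0 then int_game j
      else if even j then dy_game (j div 2) (k - 1)
      else Game [dy_game (j - 1) k] [dy_game (j + 1) k])"
  by auto
termination
  by (relation "measure (\<lambda>(j, k). 2 * k + (if even j then 0 else 1))") auto

definition dyadic :: "rat \<Rightarrow> bool" where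
  "dyadic x \<longleftrightarrow> (\<exists>(j::int) (k::nat). x = of_int j / 2 ^ k)"

text \<open>Canonical form of a dyadic rational x (unspecified for non-dyadic x).\<close>
definition canon :: "rat \<Rightarrow> game" where
  "canon x = (let k = (LEAST k::nat. \<exists>j::int. x * 2 ^ k = of_int j)
              in dy_game \<lfloor>x * 2 ^ k\<rfloor> k)"

definition ball_game :: "rat \<Rightarrow> rat \<Rightarrow> game" where
  "ball_game m \<Delta> = Game [canon (m + \<Delta>)] [canon (m - \<Delta>)]"

definition balanced :: "rat \<Rightarrow> rat \<Rightarrow> bool" where
  "balanced m \<Delta> \<longleftrightarrow>
     game_eq (game_plus (ball_game m \<Delta>) (ball_game m \<Delta>)) (game_plus (canon m) (canon m))"

end

theory Submission
  imports Defs
begin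

(* If n were not a multiple of 2^-p, the ball B = <n; -2^-p> = {n - 2^-p | n + 2^-p} would be
   the simplest number y of the interval (n - 2^-p, n + 2^-p); y differs from n because n has an
   option inside that interval, so B + B = y + y differs from n + n.  Hence a balanced ball has
   n in 2^-p Z, and then B = n.
   For a number v = m + t with 0 <= t <= 1, the ordinal sum B : v has the left options
   n - 2^-p and B : v^L and the right options n + 2^-p and B : v^R.  By induction, first on m and
   then on the binary digits of t, B : v^L and B : v^R are the two options of the canonical form of
   n + 2^-p - 2^-(p+m) + t 2^-(p+m+1), whose numerator is odd because n is a multiple of 2^-p;
   the ends of the ball are dominated by these options, so B : v equals that number. *)

declare game_le.simps[simp del] game_plus.simps[simp del] dy_game.simps[simp del]

section \<open>Order and equality of games\<close>

lemma game_leI: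
  "(\<And>gl. gl \<in> set (left G) \<Longrightarrow> \<not> game_le H gl) \<Longrightarrow>
   (\<And>hr. hr \<in> set (right H) \<Longrightarrow> \<not> game_le hr G) \<Longrightarrow> game_le G H"
  by (subst game_le.simps) blast

lemma game_le_leftD: "game_le G H \<Longrightarrow> gl \<in> set (left G) \<Longrightarrow> \<not> game_le H gl"
  by (subst (asm) game_le.simps) blast

lemma game_le_rightD: "game_le G H \<Longrightarrow> hr \<in> set (right H) \<Longrightarrow> \<not> game_le hr G"
  by (subst (asm) game_le.simps) blast

lemma game_le_refl: "game_le G G"
proof (induction G rule: measure_induct_rule[where f = size])
  case (less G)
  show ?case
  proof (rule game_leI)
    show "\<not> game_le G gl" if "gl \<in> set (left G)" for gl
      using game_le_leftD less size_left_lt that by blast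
    show "\<not> game_le hr G" if "hr \<in> set (right G)" for hr
      using game_le_rightD less size_right_lt that by blast
  qed
qed

lemma not_game_le_left: "x \<in> set (left G) \<Longrightarrow> \<not> game_le G x"
  using game_le_leftD game_le_refl by blast

lemma not_right_game_le: "x \<in> set (right G) \<Longrightarrow> \<not> game_le x G"
  using game_le_rightD game_le_refl by blast

lemma game_le_trans: "game_le A B \<Longrightarrow> game_le B C \<Longrightarrow> game_le A C"
proof (induction "size A + size B + size C" arbitrary: A B C rule: less_induct)
  case less
  show ?case
  proof (rule game_leI)
    fix al assume al: "al \<in> set (left A)"
    show "\<not> game_le C al"
    proof
      assume "game_le C al"
      then have "game_le B al"
        using less.hyps[of B C al] less.prems(2) size_left_lt[OF al] by simp
      then show False using game_le_leftD[OF less.prems(1) al] by blast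
    qed
  next
    fix cr assume cr: "cr \<in> set (right C)"
    show "\<not> game_le cr A"
    proof
      assume "game_le cr A"
      then have "game_le cr B"
        using less.hyps[of cr A B] less.prems(1) size_right_lt[OF cr] by simp
      then show False using game_le_rightD[OF less.prems(2) cr] by blast
    qed
  qed
qed

lemma game_eq_sym: "game_eq G H \<Longrightarrow> game_eq H G"
  by (simp add: game_eq_def)

lemma game_eq_trans: "game_eq A B \<Longrightarrow> game_eq B C \<Longrightarrow> game_eq A C"
  unfolding game_eq_def using game_le_trans by blast

lemma game_eqI:
  assumes "\<And>gl. gl \<in> set (left G) \<Longrightarrow> \<not> game_le X gl"
    and "\<And>gr. gr \<in> set (right G) \<Longrightarrow> \<not> game_le gr X"
    and "\<And>xl. xl \<in> set (left X) \<Longrightarrow> \<exists>gl\<in>set (left G). game_le xl gl"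
    and "\<And>xr. xr \<in> set (right X) \<Longrightarrow> \<exists>gr\<in>set (right G). game_le gr xr"
  shows "game_eq G X"
  unfolding game_eq_def
proof
  show "game_le G X"
  proof (rule game_leI)
    fix xr assume "xr \<in> set (right X)"
    then obtain gr where "gr \<in> set (right G)" "game_le gr xr" using assms(4) by blast
    then show "\<not> game_le xr G" using game_le_trans not_right_game_le by blast
  qed (use assms(1) in blast)
  show "game_le X G"
  proof (rule game_leI)
    fix xl assume "xl \<in> set (left X)"
    then obtain gl where "gl \<in> set (left G)" "game_le xl gl" using assms(3) by blast
    then show "\<not> game_le G xl" using game_le_trans not_game_le_left by blast
  qed (use assms(2) in blast)
qed

lemma game_eq_if_options_eq:
  assumes "\<And>gl. gl \<in> set (left G) \<Longrightarrow> \<exists>hl\<in>set (left H). game_eq gl hl"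
    and "\<And>hl. hl \<in> set (left H) \<Longrightarrow> \<exists>gl\<in>set (left G). game_eq hl gl"
    and "\<And>gr. gr \<in> set (right G) \<Longrightarrow> \<exists>hr\<in>set (right H). game_eq gr hr"
    and "\<And>hr. hr \<in> set (right H) \<Longrightarrow> \<exists>gr\<in>set (right G). game_eq hr gr"
  shows "game_eq G H"
proof (rule game_eqI)
  show "\<not> game_le H gl" if "gl \<in> set (left G)" for gl
    using assms(1)[OF that] game_le_trans not_game_le_left unfolding game_eq_def by blast
  show "\<not> game_le gr H" if "gr \<in> set (right G)" for gr
    using assms(3)[OF that] game_le_trans not_right_game_le unfolding game_eq_def by blast
qed (use assms(2,4) in \<open>auto simp: game_eq_def\<close>)

section \<open>Disjunctive sums\<close>

lemma left_game_plus:
  "left (game_plus A C) = map (\<lambda>x. game_plus x C) (left A) @ map (game_plus A) (left C)"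
  by (subst game_plus.simps) simp

lemma right_game_plus:
  "right (game_plus A C) = map (\<lambda>x. game_plus x C) (right A) @ map (game_plus A) (right C)"
  by (subst game_plus.simps) simp

lemma game_plus_le_cancel_right:
  "game_le (game_plus A C) (game_plus B C) \<longleftrightarrow> game_le A B"
proof (induction "size A + size B + size C" arbitrary: A B C rule: less_induct)
  case less
  note IH = less.hyps
  show ?case
  proof
    assume AB: "game_le A B"
    show "game_le (game_plus A C) (game_plus B C)"
    proof (rule game_leI)
      fix x assume "x \<in> set (left (game_plus A C))"
      then consider al where "al \<in> set (left A)" "x = game_plus al C"
        | cl where "cl \<in> set (left C)" "x = game_plus A cl"
        unfolding left_game_plus by auto
      then show "\<not> game_le (game_plus B C) x"
      proof cases
        case (1 al)
        then show ?thesis using IH[of B al C] game_le_leftD[OF AB] size_left_lt by force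
      next
        case (2 cl)
        have "game_le (game_plus A cl) (game_plus B cl)"
          using IH[of A B cl] AB size_left_lt[OF 2(1)] by simp
        moreover have "game_plus B cl \<in> set (left (game_plus B C))"
          using 2 by (simp add: left_game_plus)
        ultimately show ?thesis using 2 not_game_le_left game_le_trans by blast
      qed
    next
      fix x assume "x \<in> set (right (game_plus B C))"
      then consider br where "br \<in> set (right B)" "x = game_plus br C"
        | cr where "cr \<in> set (right C)" "x = game_plus B cr"
        unfolding right_game_plus by auto
      then show "\<not> game_le x (game_plus A C)"
      proof cases
        case (1 br)
        then show ?thesis using IH[of br A C] game_le_rightD[OF AB] size_right_lt by force
      next
        case (2 cr)
        have "game_le (game_plus A cr) (game_plus B cr)"
          using IH[of A B cr] AB size_right_lt[OF 2(1)] by simp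
        moreover have "game_plus A cr \<in> set (right (game_plus A C))"
          using 2 by (simp add: right_game_plus)
        ultimately show ?thesis using 2 not_right_game_le game_le_trans by blast
      qed
    qed
  next
    assume ACB: "game_le (game_plus A C) (game_plus B C)"
    show "game_le A B"
    proof (rule game_leI)
      fix al assume al: "al \<in> set (left A)"
      have "game_plus al C \<in> set (left (game_plus A C))" using al by (simp add: left_game_plus)
      then have "\<not> game_le (game_plus B C) (game_plus al C)" using game_le_leftD[OF ACB] by blast
      then show "\<not> game_le B al" using IH[of B al C] size_left_lt[OF al] by simp
    next
      fix br assume br: "br \<in> set (right B)"
      have "game_plus br C \<in> set (right (game_plus B C))" using br by (simp add: right_game_plus)
      then have "\<not> game_le (game_plus br C) (game_plus A C)" using game_le_rightD[OF ACB] by blast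
      then show "\<not> game_le br A" using IH[of br A C] size_right_lt[OF br] by simp
    qed
  qed
qed

lemma game_plus_commute: "game_eq (game_plus A B) (game_plus B A)"
proof (induction "size A + size B" arbitrary: A B rule: less_induct)
  case less
  have "game_eq (game_plus x B) (game_plus B x)" "game_eq (game_plus B x) (game_plus x B)"
    if "x \<in> set (left A) \<union> set (right A)" for x
    using that less size_left_lt size_right_lt by fastforce+
  moreover have "game_eq (game_plus A y) (game_plus y A)" "game_eq (game_plus y A) (game_plus A y)"
    if "y \<in> set (left B) \<union> set (right B)" for y
    using that less size_left_lt size_right_lt by fastforce+
  ultimately show ?case
    by (intro game_eq_if_options_eq) (fastforce simp: left_game_plus right_game_plus)+
qed

lemma game_plus_le_cancel_left:
  "game_le (game_plus C A) (game_plus C B) \<longleftrightarrow> game_le A B"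
  using game_plus_commute[of C A] game_plus_commute[of B C] game_plus_commute[of C B]
    game_plus_commute[of A C] game_plus_le_cancel_right[of A C B] game_le_trans
  unfolding game_eq_def by blast

lemma game_plus_cong: "game_eq A A' \<Longrightarrow> game_eq B B' \<Longrightarrow> game_eq (game_plus A B) (game_plus A' B')"
  unfolding game_eq_def
  by (meson game_le_trans game_plus_le_cancel_left game_plus_le_cancel_right)

section \<open>Ordinal sums\<close>

lemma ordsum_le_iff: "game_le (ordsum G H) (ordsum G H') \<longleftrightarrow> game_le H H'"
proof (induction "size H + size H'" arbitrary: H H' rule: less_induct)
  case less
  obtain L R L' R' where H: "H = Game L R" and H': "H' = Game L' R'"
    by (metis game.exhaust)
  have "\<forall>gl\<in>set (left G). \<not> game_le (ordsum G H') gl"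
    using not_game_le_left H' by auto
  moreover have "\<forall>gr\<in>set (right G). \<not> game_le gr (ordsum G H)"
    using not_right_game_le H by auto
  moreover have "game_le (ordsum G H') (ordsum G hl) \<longleftrightarrow> game_le H' hl" if "hl \<in> set L" for hl
    using less H size_opt_lt(1)[OF that] by simp
  moreover have "game_le (ordsum G hr) (ordsum G H) \<longleftrightarrow> game_le hr H" if "hr \<in> set R'" for hr
    using less H' size_opt_lt(2)[OF that] by simp
  ultimately show ?case
    using game_le.simps[of "ordsum G H" "ordsum G H'"] game_le.simps[of H H'] H H' by auto
qed

lemma ordsum_cong: "game_eq H H' \<Longrightarrow> game_eq (ordsum G H) (ordsum G H')"
  by (simp add: game_eq_def ordsum_le_iff)

section \<open>Dyadic rationals and their canonical forms\<close>

lemma dyadic_of_int [simp]: "dyadic (of_int j)"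
  unfolding dyadic_def by (rule exI[of _ j], rule exI[of _ 0]) simp

lemma dyadic_of_nat [simp]: "dyadic (of_nat j)"
  using dyadic_of_int[of "int j"] by simp

lemma dyadic_1 [simp]: "dyadic 1"
  using dyadic_of_int[of 1] by simp

lemma dyadic_divide_power2 [simp]: "dyadic x \<Longrightarrow> dyadic (x / 2 ^ k)"
  unfolding dyadic_def by (auto simp: power_add intro!: exI[of _ "_ + k"])

lemma dyadic_add [simp]: "dyadic x \<Longrightarrow> dyadic y \<Longrightarrow> dyadic (x + y)"
proof -
  assume "dyadic x" "dyadic y"
  then obtain a i b j where x: "x = of_int a / 2 ^ i" and y: "y = of_int b / 2 ^ j"
    unfolding dyadic_def by blast
  have "x + y = of_int (a * 2 ^ j + b * 2 ^ i) / 2 ^ (i + j)"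
    unfolding x y by (simp add: field_simps power_add)
  then show ?thesis unfolding dyadic_def by blast
qed

lemma dyadic_uminus [simp]: "dyadic x \<Longrightarrow> dyadic (- x)"
  unfolding dyadic_def by (metis minus_divide_left of_int_minus)

lemma dyadic_diff [simp]: "dyadic x \<Longrightarrow> dyadic y \<Longrightarrow> dyadic (x - y)"
  using dyadic_add[of x "- y"] by simp

definition dyadic_exp :: "rat \<Rightarrow> nat" where
  "dyadic_exp x = (LEAST k. \<exists>j::int. x * 2 ^ k = of_int j)"

lemma canon_eq_dy_game: "canon x = dy_game \<lfloor>x * 2 ^ dyadic_exp x\<rfloor> (dyadic_exp x)"
  by (simp add: canon_def dyadic_exp_def Let_def)

lemma dyadic_exp_le: "x * 2 ^ k = of_int j \<Longrightarrow> dyadic_exp x \<le> k"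
  unfolding dyadic_exp_def by (rule Least_le) blast

lemma dyadic_exp_of_int: "dyadic_exp (of_int j) = 0"
  using dyadic_exp_le[of "of_int j" 0 j] by simp

lemma dyadic_scaled_eq_floor:
  assumes "dyadic x"
  shows "x * 2 ^ dyadic_exp x = of_int \<lfloor>x * 2 ^ dyadic_exp x\<rfloor>"
proof -
  obtain j k where "x = of_int j / 2 ^ k" using assms unfolding dyadic_def by blast
  then have "x * 2 ^ k = of_int j" by simp
  then have "\<exists>k (j::int). x * 2 ^ k = of_int j" by blast
  then have "\<exists>j::int. x * 2 ^ dyadic_exp x = of_int j"
    unfolding dyadic_exp_def by (rule LeastI_ex)
  then show ?thesis by auto
qed

lemma dyadic_scaled_int:
  assumes "dyadic x" "dyadic_exp x \<le> k"
  obtains j where "x * 2 ^ k = of_int j"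
proof
  let ?e = "dyadic_exp x"
  have "x * 2 ^ k = x * 2 ^ ?e * 2 ^ (k - ?e)"
    using assms(2) by (simp add: power_add[symmetric])
  also have "\<dots> = of_int (\<lfloor>x * 2 ^ ?e\<rfloor> * 2 ^ (k - ?e))"
    using dyadic_scaled_eq_floor[OF assms(1)] by simp
  finally show "x * 2 ^ k = of_int (\<lfloor>x * 2 ^ ?e\<rfloor> * 2 ^ (k - ?e))" .
qed

lemma odd_scaled_if_dyadic_exp_pos:
  assumes "dyadic x" "0 < dyadic_exp x"
  shows "odd \<lfloor>x * 2 ^ dyadic_exp x\<rfloor>"
proof
  let ?e = "dyadic_exp x"
  assume "even \<lfloor>x * 2 ^ ?e\<rfloor>"
  then obtain i where i: "\<lfloor>x * 2 ^ ?e\<rfloor> = 2 * i" by blast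
  have "(2::rat) ^ ?e = 2 * 2 ^ (?e - 1)"
    using assms(2) by (cases ?e) simp_all
  then have "x * 2 ^ (?e - 1) = of_int i"
    using dyadic_scaled_eq_floor[OF assms(1)] i by simp
  then show False using dyadic_exp_le assms(2) by fastforce
qed

lemma dyadic_exp_odd_fraction:
  assumes "odd j"
  shows "dyadic_exp (of_int j / 2 ^ k) = k"
proof (rule antisym)
  let ?x = "of_int j / 2 ^ k :: rat" and ?e = "dyadic_exp (of_int j / 2 ^ k)"
  show "?e \<le> k" by (rule dyadic_exp_le[of _ _ j]) simp
  show "k \<le> ?e"
  proof (rule ccontr)
    assume "\<not> k \<le> ?e"
    obtain i where i: "?x * 2 ^ ?e = of_int i"
      using dyadic_scaled_eq_floor[of ?x] unfolding dyadic_def by blast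
    have "of_int j = ?x * 2 ^ k" by simp
    also have "\<dots> = ?x * 2 ^ ?e * 2 ^ (k - ?e)"
      using \<open>\<not> k \<le> ?e\<close> by (simp add: mult.assoc power_add[symmetric])
    also have "\<dots> = of_int (i * 2 ^ (k - ?e))"
      by (simp only: i of_int_mult of_int_power of_int_numeral)
    finally have "j = i * 2 ^ (k - ?e)" by (simp only: of_int_eq_iff)
    moreover have "even (i * 2 ^ (k - ?e))" using \<open>\<not> k \<le> ?e\<close> by simp
    ultimately show False using assms by metis
  qed
qed

lemma dy_game_eq_canon: "dy_game j k = canon (of_int j / 2 ^ k)"
proof (induction j k rule: dy_game.induct)
  case (1 j k)
  consider "k = 0" | "k \<noteq> 0" "even j" | "k \<noteq> 0" "odd j" by blast
  then show ?case
  proof cases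
    case 1
    then show ?thesis by (simp add: canon_eq_dy_game dyadic_exp_of_int)
  next
    case 2
    then obtain i where "j = 2 * i" by blast
    moreover have "(2::rat) ^ k = 2 * 2 ^ (k - 1)" using 2 by (cases k) simp_all
    ultimately have "of_int (j div 2) / 2 ^ (k - 1) = (of_int j / 2 ^ k :: rat)" by simp
    then show ?thesis using 1 2 by (subst dy_game.simps) simp
  next
    case 3
    then show ?thesis by (simp add: canon_eq_dy_game dyadic_exp_odd_fraction)
  qed
qed

lemma canon_odd_numerator:
  assumes "x * 2 ^ k = of_int j" "odd j" "0 < k"
  shows "canon x = Game [canon (x - 1 / 2 ^ k)] [canon (x + 1 / 2 ^ k)]"
proof -
  have x: "x = of_int j / 2 ^ k" using assms(1) by (simp add: field_simps)
  have "canon x = dy_game j k" by (simp add: x dy_game_eq_canon)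
  also have "\<dots> = Game [dy_game (j - 1) k] [dy_game (j + 1) k]"
    using assms(2,3) by (subst dy_game.simps) simp
  finally show ?thesis by (simp add: x dy_game_eq_canon diff_divide_distrib add_divide_distrib)
qed

definition canon_left_vals :: "rat \<Rightarrow> rat list" where
  "canon_left_vals x = (if dyadic_exp x = 0 \<and> x \<le> 0 then [] else [x - 1 / 2 ^ dyadic_exp x])"

definition canon_right_vals :: "rat \<Rightarrow> rat list" where
  "canon_right_vals x = (if dyadic_exp x = 0 \<and> 0 \<le> x then [] else [x + 1 / 2 ^ dyadic_exp x])"

lemma int_game_pos: "0 < j \<Longrightarrow> int_game j = Game [int_game (j - 1)] []"
proof -
  assume "0 < j"
  moreover have "nat j = Suc (nat (j - 1))" using \<open>0 < j\<close> by simp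
  ultimately show ?thesis by (simp add: int_game_def)
qed

lemma int_game_neg: "j < 0 \<Longrightarrow> int_game j = Game [] [int_game (j + 1)]"
proof -
  assume "j < 0"
  moreover have "nat (- j) = Suc (nat (- (j + 1)))" using \<open>j < 0\<close> by simp
  ultimately show ?thesis by (simp add: int_game_def)
qed

lemma canon_eq_Game:
  assumes "dyadic x"
  shows "canon x = Game (map canon (canon_left_vals x)) (map canon (canon_right_vals x))"
proof (cases "dyadic_exp x = 0")
  case True
  define j where "j = \<lfloor>x\<rfloor>"
  have x: "x = of_int j" using dyadic_scaled_eq_floor[OF assms] True unfolding j_def by simp
  have canon_int: "canon (of_int i) = int_game i" for i
    using dy_game_eq_canon[of i 0] by (simp add: dy_game.simps)
  consider "0 < j" | "j < 0" | "j = 0" by linarith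
  then show ?thesis
  proof cases
    case 1
    then show ?thesis
      using canon_int[of j] canon_int[of "j - 1"] int_game_pos True
      by (simp add: x canon_left_vals_def canon_right_vals_def)
  next
    case 2
    then show ?thesis
      using canon_int[of j] canon_int[of "j + 1"] int_game_neg True
      by (simp add: x canon_left_vals_def canon_right_vals_def)
  next
    case 3
    then show ?thesis
      using canon_int[of 0] True
      by (simp add: x canon_left_vals_def canon_right_vals_def int_game_def)
  qed
next
  case False
  then show ?thesis
    using canon_odd_numerator[OF dyadic_scaled_eq_floor[OF assms]
        odd_scaled_if_dyadic_exp_pos[OF assms]]
    by (simp add: canon_left_vals_def canon_right_vals_def)
qed

lemma canon_left_vals_lt: "dyadic x \<Longrightarrow> l \<in> set (canon_left_vals x) \<Longrightarrow> dyadic l \<and> l < x"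
  by (cases "dyadic_exp x = 0 \<and> x \<le> 0") (simp_all add: canon_left_vals_def)

lemma canon_right_vals_gt: "dyadic x \<Longrightarrow> r \<in> set (canon_right_vals x) \<Longrightarrow> dyadic r \<and> x < r"
  by (cases "dyadic_exp x = 0 \<and> 0 \<le> x") (simp_all add: canon_right_vals_def)

lemma left_canon: "dyadic x \<Longrightarrow> set (left (canon x)) = canon ` set (canon_left_vals x)"
  using arg_cong[OF canon_eq_Game, of x left] by simp

lemma right_canon: "dyadic x \<Longrightarrow> set (right (canon x)) = canon ` set (canon_right_vals x)"
  using arg_cong[OF canon_eq_Game, of x right] by simp

lemma size_canon_left_val:
  "dyadic x \<Longrightarrow> l \<in> set (canon_left_vals x) \<Longrightarrow> size (canon l) < size (canon x)"
  by (rule size_left_lt) (simp add: left_canon)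

lemma size_canon_right_val:
  "dyadic x \<Longrightarrow> r \<in> set (canon_right_vals x) \<Longrightarrow> size (canon r) < size (canon x)"
  by (rule size_right_lt) (simp add: right_canon)

lemma canon_0: "canon 0 = Game [] []"
  using canon_eq_Game[OF dyadic_of_int[of 0]] dyadic_exp_of_int[of 0]
  by (simp add: canon_left_vals_def canon_right_vals_def)

lemma canon_of_nat_Suc: "canon (of_nat (Suc m)) = Game [canon (of_nat m)] []"
  using canon_eq_Game[of "of_nat (Suc m)"] dyadic_exp_of_int[of "int (Suc m)"]
  by (simp add: canon_left_vals_def canon_right_vals_def)

lemma canon_of_nat_add_odd_fraction:
  "canon (of_nat m + of_nat (2 * c + 1) / 2 ^ Suc k) =
     Game [canon (of_nat m + of_nat c / 2 ^ k)] [canon (of_nat m + of_nat (c + 1) / 2 ^ k)]"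
proof -
  let ?v = "of_nat m + of_nat (2 * c + 1) / 2 ^ Suc k :: rat"
  have "?v * 2 ^ Suc k = of_int (int m * 2 ^ Suc k + 2 * int c + 1)"
    by (simp add: field_simps)
  then have "canon ?v = Game [canon (?v - 1 / 2 ^ Suc k)] [canon (?v + 1 / 2 ^ Suc k)]"
    by (rule canon_odd_numerator) simp_all
  also have "?v - 1 / 2 ^ Suc k = of_nat m + of_nat c / 2 ^ k"
    by (simp add: field_simps)
  also have "?v + 1 / 2 ^ Suc k = of_nat m + of_nat (c + 1) / 2 ^ k"
    by (simp add: field_simps)
  finally show ?thesis .
qed

lemma scaled_int_lt_imp_add_le:
  fixes x y :: rat
  assumes "x * 2 ^ k = of_int i" "y * 2 ^ k = of_int j" "x < y"
  shows "x + 1 / 2 ^ k \<le> y"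
proof -
  have "(of_int i :: rat) < of_int j"
    using assms by (metis mult_strict_right_mono zero_less_power zero_less_numeral)
  then have "of_int i + 1 \<le> (of_int j :: rat)"
    by (metis of_int_1 of_int_add of_int_le_iff of_int_less_iff zless_imp_add1_zle)
  then have "(x + 1 / 2 ^ k) * 2 ^ k \<le> y * 2 ^ k" using assms(1,2) by (simp add: distrib_right)
  then show ?thesis by simp
qed

lemma canon_vals_separate:
  assumes "dyadic c" "dyadic d" "c < d"
  shows "(\<exists>l\<in>set (canon_left_vals d). c \<le> l) \<or> (\<exists>r\<in>set (canon_right_vals c). r \<le> d)"
proof -
  let ?ec = "dyadic_exp c" and ?ed = "dyadic_exp d"
  have on_grid: "c + 1 / 2 ^ k \<le> d" if "?ec \<le> k" "?ed \<le> k" for k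
    using dyadic_scaled_int[OF assms(1) that(1)] dyadic_scaled_int[OF assms(2) that(2)]
      scaled_int_lt_imp_add_le assms(3) by metis
  consider "0 < ?ed" "?ec \<le> ?ed" | "0 < ?ec" "?ed < ?ec" | "?ec = 0" "?ed = 0" by linarith
  then show ?thesis
  proof cases
    case 1
    then show ?thesis using on_grid[of ?ed] by (simp add: canon_left_vals_def)
  next
    case 2
    then show ?thesis using on_grid[of ?ec] by (simp add: canon_right_vals_def)
  next
    case 3
    then show ?thesis
      using on_grid[of 0] assms(3) by (auto simp: canon_left_vals_def canon_right_vals_def)
  qed
qed

lemma canon_le_iff: "dyadic c \<Longrightarrow> dyadic d \<Longrightarrow> game_le (canon c) (canon d) \<longleftrightarrow> c \<le> d"
proof (induction "size (canon c) + size (canon d)" arbitrary: c d rule: less_induct)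
  case less
  note IH = less.hyps and dc = less.prems(1) and dd = less.prems(2)
  show ?case
  proof
    assume "c \<le> d"
    show "game_le (canon c) (canon d)"
    proof (rule game_leI)
      fix gl assume "gl \<in> set (left (canon c))"
      then obtain l where l: "l \<in> set (canon_left_vals c)" "gl = canon l"
        using left_canon dc by auto
      then show "\<not> game_le (canon d) gl"
        using IH[of d l] dd \<open>c \<le> d\<close> canon_left_vals_lt[OF dc] size_canon_left_val[OF dc]
        by fastforce
    next
      fix gr assume "gr \<in> set (right (canon d))"
      then obtain r where r: "r \<in> set (canon_right_vals d)" "gr = canon r"
        using right_canon dd by auto
      then show "\<not> game_le gr (canon c)"
        using IH[of r c] dc \<open>c \<le> d\<close> canon_right_vals_gt[OF dd] size_canon_right_val[OF dd]
        by fastforce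
    qed
  next
    assume le: "game_le (canon c) (canon d)"
    show "c \<le> d"
    proof (rule ccontr)
      assume "\<not> c \<le> d"
      then consider l where "l \<in> set (canon_left_vals c)" "d \<le> l"
        | r where "r \<in> set (canon_right_vals d)" "r \<le> c"
        using canon_vals_separate[OF dd dc] by fastforce
      then show False
      proof cases
        case (1 l)
        then have "game_le (canon d) (canon l)"
          using IH[of d l] dd canon_left_vals_lt[OF dc] size_canon_left_val[OF dc] by force
        then show False using game_le_leftD[OF le] 1(1) left_canon[OF dc] by blast
      next
        case (2 r)
        then have "game_le (canon r) (canon c)"
          using IH[of r c] dc canon_right_vals_gt[OF dd] size_canon_right_val[OF dd] by force
        then show False using game_le_rightD[OF le] 2(1) right_canon[OF dd] by blast
      qed
    qed
  qed
qed

lemma canon_plus_self_inj: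
  assumes "dyadic x" "dyadic y"
    and "game_eq (game_plus (canon x) (canon x)) (game_plus (canon y) (canon y))"
  shows "x = y"
proof -
  have "\<not> game_le (game_plus (canon v) (canon v)) (game_plus (canon u) (canon u))"
    if "dyadic u" "dyadic v" "u < v" for u v
  proof
    assume "game_le (game_plus (canon v) (canon v)) (game_plus (canon u) (canon u))"
    moreover have "game_le (game_plus (canon u) (canon u)) (game_plus (canon u) (canon v))"
      using that by (simp add: game_plus_le_cancel_left canon_le_iff)
    ultimately have "game_le (game_plus (canon v) (canon v)) (game_plus (canon u) (canon v))"
      by (rule game_le_trans)
    then show False using that by (simp add: game_plus_le_cancel_right canon_le_iff)
  qed
  then show ?thesis using assms unfolding game_eq_def by (metis linorder_neqE)
qed

lemma game_eq_canon_between: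
  assumes "dyadic l" "dyadic r" "dyadic x" "l < x" "x < r"
    and "\<forall>a\<in>set (canon_left_vals x). a \<le> l" "\<forall>b\<in>set (canon_right_vals x). r \<le> b"
  shows "game_eq (Game [canon l] [canon r]) (canon x)"
  using assms
  by (intro game_eqI)
    (auto simp: left_canon right_canon canon_le_iff dest: canon_left_vals_lt canon_right_vals_gt)

lemma game_eq_canonI:
  assumes "dyadic x" "canon x = Game [canon xL] [canon xR]"
    and "\<forall>g\<in>set Ls. \<exists>z. dyadic z \<and> z < x \<and> game_le g (canon z)"
    and "\<forall>g\<in>set Rs. \<exists>z. dyadic z \<and> x < z \<and> game_le (canon z) g"
    and "\<exists>g\<in>set Ls. game_le (canon xL) g" "\<exists>g\<in>set Rs. game_le g (canon xR)"
  shows "game_eq (Game Ls Rs) (canon x)"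
proof (rule game_eqI)
  fix gl assume "gl \<in> set (left (Game Ls Rs))"
  then obtain z where "dyadic z" "z < x" "game_le gl (canon z)" using assms(3) by auto
  then show "\<not> game_le (canon x) gl" using assms(1) game_le_trans canon_le_iff by fastforce
next
  fix gr assume "gr \<in> set (right (Game Ls Rs))"
  then obtain z where "dyadic z" "x < z" "game_le (canon z) gr" using assms(4) by auto
  then show "\<not> game_le gr (canon x)" using assms(1) game_le_trans canon_le_iff by fastforce
qed (use assms(2,5,6) in simp_all)

lemma simplest_between:
  assumes "dyadic l" "dyadic r" "l < r"
  obtains y where "dyadic y" "l < y" "y < r"
    "\<forall>a\<in>set (canon_left_vals y). a \<le> l" "\<forall>b\<in>set (canon_right_vals y). r \<le> b"
proof -
  let ?P = "\<lambda>y. dyadic y \<and> l < y \<and> y < r"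
  have "?P ((l + r) / 2)" using assms dyadic_divide_power2[of "l + r" 1] by simp
  then obtain y where y: "?P y" and least: "\<And>z. ?P z \<Longrightarrow> size (canon y) \<le> size (canon z)"
    using ex_has_least_nat[of ?P _ "\<lambda>y. size (canon y)"] by blast
  show thesis
  proof (rule that)
    show "\<forall>a\<in>set (canon_left_vals y). a \<le> l"
      using y least canon_left_vals_lt size_canon_left_val by force
    show "\<forall>b\<in>set (canon_right_vals y). r \<le> b"
      using y least canon_right_vals_gt size_canon_right_val by force
  qed (use y in auto)
qed

lemma inverse_power2_le_iff: "(1::rat) / 2 ^ p \<le> 1 / 2 ^ e \<longleftrightarrow> e \<le> p"
  by (simp add: field_simps)

lemma canon_left_vals_le_iff:
  "(\<forall>a\<in>set (canon_left_vals x). a \<le> x - 1 / 2 ^ p) \<longleftrightarrow> dyadic_exp x \<le> p"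
  by (auto simp: canon_left_vals_def inverse_power2_le_iff)

lemma canon_right_vals_ge_iff:
  "(\<forall>b\<in>set (canon_right_vals x). x + 1 / 2 ^ p \<le> b) \<longleftrightarrow> dyadic_exp x \<le> p"
  by (auto simp: canon_right_vals_def inverse_power2_le_iff)

section \<open>Balanced balls\<close>

lemma ball_game_neg: "ball_game m (- d) = Game [canon (m - d)] [canon (m + d)]"
  by (simp add: ball_game_def)

lemma dyadic_exp_le_if_balanced:
  assumes "dyadic n" "balanced n (- (1 / 2 ^ p))"
  shows "dyadic_exp n \<le> p"
proof -
  let ?l = "n - 1 / 2 ^ p" and ?r = "n + 1 / 2 ^ p"
  have "dyadic ?l" "dyadic ?r" "?l < ?r" using assms(1) by simp_all
  then obtain y where y: "dyadic y" "?l < y" "y < ?r"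
    and y_left: "\<forall>a\<in>set (canon_left_vals y). a \<le> ?l"
    and y_right: "\<forall>b\<in>set (canon_right_vals y). ?r \<le> b"
    by (rule simplest_between)
  then have "game_eq (ball_game n (- (1 / 2 ^ p))) (canon y)"
    by (simp add: ball_game_neg game_eq_canon_between assms(1))
  then have "game_eq (game_plus (canon y) (canon y)) (game_plus (canon n) (canon n))"
    using assms(2) game_plus_cong game_eq_sym game_eq_trans unfolding balanced_def by metis
  then have "y = n" using canon_plus_self_inj y(1) assms(1) by blast
  then show ?thesis using y_left canon_left_vals_le_iff by simp
qed

lemma ball_game_eq_canon:
  assumes "dyadic n" "dyadic_exp n \<le> p"
  shows "game_eq (ball_game n (- (1 / 2 ^ p))) (canon n)"
  using assms canon_left_vals_le_iff canon_right_vals_ge_iff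
  by (simp add: ball_game_neg game_eq_canon_between)

section \<open>Ordinal sums with a balanced ball\<close>

definition ball_ordsum_val :: "rat \<Rightarrow> nat \<Rightarrow> nat \<Rightarrow> rat \<Rightarrow> rat" where
  "ball_ordsum_val n p m t = n + 1 / 2 ^ p - 1 / 2 ^ (p + m) + t / 2 ^ (p + m + 1)"

lemma dyadic_ball_ordsum_val [simp]:
  "dyadic n \<Longrightarrow> dyadic t \<Longrightarrow> dyadic (ball_ordsum_val n p m t)"
  unfolding ball_ordsum_val_def by (intro dyadic_add dyadic_diff dyadic_divide_power2 dyadic_1)

lemma ball_ordsum_val_strict_mono: "t < t' \<Longrightarrow> ball_ordsum_val n p m t < ball_ordsum_val n p m t'"
  by (simp add: ball_ordsum_val_def divide_strict_right_mono)

lemma ball_ordsum_val_one: "ball_ordsum_val n p m 1 = ball_ordsum_val n p (Suc m) 0"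
  by (simp add: ball_ordsum_val_def field_simps)

lemma ball_ordsum_val_bounds:
  assumes "0 \<le> t" "t \<le> 1"
  shows "n - 1 / 2 ^ p < ball_ordsum_val n p m t" "ball_ordsum_val n p m t < n + 1 / 2 ^ p"
proof -
  have "ball_ordsum_val n p m t = n + 1 / 2 ^ p - (1 - t / 2) / 2 ^ (p + m)"
    by (simp add: ball_ordsum_val_def field_simps)
  moreover have "0 < (1 - t / 2) / 2 ^ (p + m)" using assms by simp
  moreover have "(1 - t / 2) / 2 ^ (p + m) \<le> 1 / 2 ^ (p + m)"
    using assms by (simp add: divide_right_mono)
  moreover have "(1::rat) / 2 ^ (p + m) \<le> 1 / 2 ^ p" by (simp add: inverse_power2_le_iff)
  ultimately show "n - 1 / 2 ^ p < ball_ordsum_val n p m t"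
    "ball_ordsum_val n p m t < n + 1 / 2 ^ p"
    by linarith+
qed

lemma canon_ball_ordsum_val:
  fixes b :: int
  assumes "dyadic n" "dyadic_exp n \<le> p" "odd b"
  shows "canon (ball_ordsum_val n p m (of_int b / 2 ^ k)) =
    Game [canon (ball_ordsum_val n p m (of_int (b - 1) / 2 ^ k))]
         [canon (ball_ordsum_val n p m (of_int (b + 1) / 2 ^ k))]"
proof -
  let ?K = "p + m + k + 1" and ?x = "ball_ordsum_val n p m (of_int b / 2 ^ k)"
  obtain j where j: "n * 2 ^ p = of_int j" using dyadic_scaled_int assms(1,2) .
  have "?x * 2 ^ ?K = of_int (j * 2 ^ (m + k + 1) + 2 ^ (m + k + 1) - 2 ^ (k + 1) + b)"
    using j by (simp add: ball_ordsum_val_def field_simps power_add)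
  moreover have "odd (j * 2 ^ (m + k + 1) + 2 ^ (m + k + 1) - 2 ^ (k + 1) + b)"
    using assms(3) by simp
  ultimately have "canon ?x = Game [canon (?x - 1 / 2 ^ ?K)] [canon (?x + 1 / 2 ^ ?K)]"
    by (rule canon_odd_numerator) simp
  moreover have "?x - 1 / 2 ^ ?K = ball_ordsum_val n p m (of_int (b - 1) / 2 ^ k)"
    by (simp add: ball_ordsum_val_def field_simps power_add)
  moreover have "?x + 1 / 2 ^ ?K = ball_ordsum_val n p m (of_int (b + 1) / 2 ^ k)"
    by (simp add: ball_ordsum_val_def field_simps power_add)
  ultimately show ?thesis by simp
qed

lemma ordsum_ball_canon_step:
  fixes n :: rat and p :: nat and b :: int
  defines "B \<equiv> ball_game n (- (1 / 2 ^ p))"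
  assumes "dyadic n" "dyadic_exp n \<le> p" "odd b" "0 < b" "b \<le> 2 ^ k"
    and "canon v = Game [canon vL] Rv"
    and "game_eq (ordsum B (canon vL)) (canon (ball_ordsum_val n p m (of_int (b - 1) / 2 ^ k)))"
    and "\<forall>g\<in>set Rv. game_eq (ordsum B g) (canon (ball_ordsum_val n p m (of_int (b + 1) / 2 ^ k)))"
    \<comment> \<open>an integer v has no right option; the target's one is then the ball's right end\<close>
    and "Rv = [] \<Longrightarrow> ball_ordsum_val n p m (of_int (b + 1) / 2 ^ k) = n + 1 / 2 ^ p"
  shows "game_eq (ordsum B (canon v)) (canon (ball_ordsum_val n p m (of_int b / 2 ^ k)))"
proof -
  let ?val = "\<lambda>c. ball_ordsum_val n p m (of_int c / 2 ^ k)"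
  have "0 \<le> (of_int b / 2 ^ k :: rat)" "(of_int b / 2 ^ k :: rat) \<le> 1"
    using assms(5,6) by (simp_all add: field_simps)
  then have between: "n - 1 / 2 ^ p < ?val b" "?val b < n + 1 / 2 ^ p"
    by (rule ball_ordsum_val_bounds)+
  have lt: "?val (b - 1) < ?val b" "?val b < ?val (b + 1)"
    by (simp_all add: ball_ordsum_val_strict_mono divide_strict_right_mono)
  have dy: "dyadic (n - 1 / 2 ^ p)" "dyadic (n + 1 / 2 ^ p)"
    "dyadic (?val (b - 1))" "dyadic (?val (b + 1))"
    using assms(2) by simp_all
  have "ordsum B (canon v) =
      Game [canon (n - 1 / 2 ^ p), ordsum B (canon vL)] (canon (n + 1 / 2 ^ p) # map (ordsum B) Rv)"
    by (simp add: assms(7) B_def ball_game_neg)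
  also have "game_eq \<dots> (canon (?val b))"
  proof (rule game_eq_canonI[OF _ canon_ball_ordsum_val])
    show "\<forall>g\<in>set [canon (n - 1 / 2 ^ p), ordsum B (canon vL)].
        \<exists>z. dyadic z \<and> z < ?val b \<and> game_le g (canon z)"
      using assms(8) dy between lt game_le_refl unfolding game_eq_def by (simp; blast)
    show "\<forall>g\<in>set (canon (n + 1 / 2 ^ p) # map (ordsum B) Rv).
        \<exists>z. dyadic z \<and> ?val b < z \<and> game_le (canon z) g"
      using assms(9) dy between lt game_le_refl unfolding game_eq_def by (simp; blast)
    show "\<exists>g\<in>set [canon (n - 1 / 2 ^ p), ordsum B (canon vL)]. game_le (canon (?val (b - 1))) g"
      using assms(8) unfolding game_eq_def by auto
    show "\<exists>g\<in>set (canon (n + 1 / 2 ^ p) # map (ordsum B) Rv). game_le g (canon (?val (b + 1)))"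
      using assms(9,10) game_le_refl unfolding game_eq_def by (cases Rv) auto
  qed (use assms(2-4) in simp_all)
  finally show ?thesis .
qed

lemma ordsum_ball_canon_nat:
  assumes "dyadic n" "dyadic_exp n \<le> p"
  shows "game_eq (ordsum (ball_game n (- (1 / 2 ^ p))) (canon (of_nat m)))
                 (canon (ball_ordsum_val n p m 0))"
proof (induction m)
  case 0
  have "ordsum (ball_game n (- (1 / 2 ^ p))) (canon (of_nat 0)) = ball_game n (- (1 / 2 ^ p))"
    by (simp add: canon_0 ball_game_def)
  then show ?case using ball_game_eq_canon[OF assms] by (simp add: ball_ordsum_val_def)
next
  case (Suc m)
  have "game_eq (ordsum (ball_game n (- (1 / 2 ^ p))) (canon (of_nat (Suc m))))
                (canon (ball_ordsum_val n p m (of_int 1 / 2 ^ 0)))"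
    by (rule ordsum_ball_canon_step[OF assms _ _ _ canon_of_nat_Suc])
      (use Suc.IH in \<open>simp_all add: ball_ordsum_val_def\<close>)
  then show ?case by (simp add: ball_ordsum_val_one)
qed

lemma ordsum_ball_canon_dyadic:
  assumes "dyadic n" "dyadic_exp n \<le> p" "b \<le> 2 ^ k"
  shows "game_eq (ordsum (ball_game n (- (1 / 2 ^ p))) (canon (of_nat m + of_nat b / 2 ^ k)))
                 (canon (ball_ordsum_val n p m (of_nat b / 2 ^ k)))"
  using assms(3)
proof (induction k arbitrary: b)
  case 0
  then consider "b = 0" | "b = 1" by fastforce
  then show ?case
    using ordsum_ball_canon_nat[OF assms(1,2), of m]
      ordsum_ball_canon_nat[OF assms(1,2), of "Suc m"]
    by cases (simp_all add: ball_ordsum_val_one add.commute)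
next
  case (Suc k)
  show ?case
  proof (cases "even b")
    case True
    then obtain c where b: "b = 2 * c" by blast
    have "(of_nat b / 2 ^ Suc k :: rat) = of_nat c / 2 ^ k" by (simp add: b)
    then show ?thesis using Suc.IH[of c] Suc.prems b by simp
  next
    case False
    then obtain c where b: "b = 2 * c + 1" using oddE by blast
    let ?B = "ball_game n (- (1 / 2 ^ p))" and ?v = "of_nat m + of_nat b / 2 ^ Suc k :: rat"
    note canon_v = canon_of_nat_add_odd_fraction[of m c k, folded b]
    have "(of_int (int b - 1) / 2 ^ Suc k :: rat) = of_nat c / 2 ^ k"
      "(of_int (int b + 1) / 2 ^ Suc k :: rat) = of_nat (c + 1) / 2 ^ k"
      by (simp_all add: b field_simps)
    moreover have "c \<le> 2 ^ k" "c + 1 \<le> 2 ^ k" using Suc.prems b by simp_all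
    ultimately have
      IH_left: "game_eq (ordsum ?B (canon (of_nat m + of_nat c / 2 ^ k)))
                  (canon (ball_ordsum_val n p m (of_int (int b - 1) / 2 ^ Suc k)))" and
      IH_right: "game_eq (ordsum ?B (canon (of_nat m + of_nat (c + 1) / 2 ^ k)))
                  (canon (ball_ordsum_val n p m (of_int (int b + 1) / 2 ^ Suc k)))"
      using Suc.IH[of c] Suc.IH[of "c + 1"] by (simp_all only:)
    have "game_eq (ordsum ?B (canon ?v))
        (canon (ball_ordsum_val n p m (of_int (int b) / 2 ^ Suc k)))"
    proof (rule ordsum_ball_canon_step[OF assms(1,2) _ _ _ canon_v IH_left])
      show "odd (int b)" "0 < int b" using False b by simp_all
      show "int b \<le> 2 ^ Suc k"
        using Suc.prems by (metis of_nat_le_iff of_nat_numeral of_nat_power)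
    qed (use IH_right in simp_all)
    then show ?thesis by simp
  qed
qed

theorem theorem4p5:
  fixes n :: rat and p m q a :: nat and H :: game
  assumes "dyadic n"
    and "balanced n (- (1 / 2 ^ p))"
    and "(odd a \<and> 0 < a \<and> a < 2 ^ q) \<or> a = 0"
    and "of_nat m + of_nat a / 2 ^ q > (0::rat)"
    and "game_eq H (canon (of_nat m + of_nat a / 2 ^ q))"
  shows "game_eq (ordsum (ball_game n (- (1 / 2 ^ p))) H)
           (canon (n + 1 / 2 ^ p - 1 / 2 ^ (p + m) + of_nat a / 2 ^ (p + m + q + 1)))"
proof -
  let ?B = "ball_game n (- (1 / 2 ^ p))" and ?h = "of_nat m + of_nat a / 2 ^ q :: rat"
  have "dyadic_exp n \<le> p" using dyadic_exp_le_if_balanced assms(1,2) .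
  moreover have "a \<le> 2 ^ q" using assms(3) by auto
  ultimately have
    "game_eq (ordsum ?B (canon ?h)) (canon (ball_ordsum_val n p m (of_nat a / 2 ^ q)))"
    by (rule ordsum_ball_canon_dyadic[OF assms(1)])
  then have "game_eq (ordsum ?B H) (canon (ball_ordsum_val n p m (of_nat a / 2 ^ q)))"
    by (rule game_eq_trans[OF ordsum_cong[OF assms(5)]])
  moreover have "ball_ordsum_val n p m (of_nat a / 2 ^ q)
      = n + 1 / 2 ^ p - 1 / 2 ^ (p + m) + of_nat a / 2 ^ (p + m + q + 1)"
    by (simp add: ball_ordsum_val_def field_simps power_add)
  ultimately show ?thesis by simp
qed

end
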